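(* Let $n\ge 4$ be an integer, let $i,k\in\{1,\ldots,n\}$, and let $H\sim\text{Hyp}(n,i,k)$ be such that $\mathbb{E}(H)\in [1, \min\{i,k\}-2]$ and $\frac{(n-i)(n-k)}{n}>1$. Assume further that $\text{Var}(H)\ge 1$. Then $\mathbb{P}(H\ge \mathbb{E}(H)) \ge 0.049$.
   Context: $\text{Hyp}(n,i,k)$ denotes the hypergeometric distribution: the number of black marbles in a sample without replacement of size $k$ from an urn with $i$ black and $n-i$ white marbles, i.e. $\mathbb{P}(H=j)=\binom{i}{j}\binom{n-i}{k-j}/\binom{n}{k}$. One has $\mathbb{E}(H)=ik/n$ and $\text{Var}(H)=k\cdot\frac{i}{n}\cdot\frac{n-i}{n}\cdot\frac{n-k}{n-1}$. *)

theory Defs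
  imports Complex_Main
begin

text \<open>Hypergeometric distribution Hyp(n,i,k): number of black marbles in a sample of
  size k drawn without replacement from an urn with i black and n-i white marbles.
  Its support is contained in {0..k}.\<close>

definition hyp_pmf :: "nat \<Rightarrow> nat \<Rightarrow> nat \<Rightarrow> nat \<Rightarrow> real" where
  "hyp_pmf n i k j = real ((i choose j) * ((n - i) choose (k - j))) / real (n choose k)"

definition hyp_prob :: "nat \<Rightarrow> nat \<Rightarrow> nat \<Rightarrow> (nat \<Rightarrow> bool) \<Rightarrow> real" where
  "hyp_prob n i k P = (\<Sum>j\<in>{j. j \<le> k \<and> P j}. hyp_pmf n i k j)"

definition hyp_mean :: "nat \<Rightarrow> nat \<Rightarrow> nat \<Rightarrow> real" where
  "hyp_mean n i k = (\<Sum>j\<le>k. real j * hyp_pmf n i k j)"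

definition hyp_var :: "nat \<Rightarrow> nat \<Rightarrow> nat \<Rightarrow> real" where
  "hyp_var n i k = (\<Sum>j\<le>k. (real j - hyp_mean n i k)^2 * hyp_pmf n i k j)"

end

theory Submission
  imports Defs
begin

text \<open>
  The polynomial \<open>f(y) = 4y/25 + y\<^sup>2/10 - y\<^sup>4/160\<close> lies below the indicator of
  \<open>[0, \<infinity>)\<close>, so for any random variable \<open>X\<close> with mean \<open>\<mu>\<close>, variance \<open>\<sigma>\<^sup>2\<close> and kurtosis
  \<open>\<kappa>\<close> we get \<open>P(X \<ge> \<mu>) \<ge> E f((X - \<mu>)/\<sigma>) = 1/10 - \<kappa>/160\<close>.
  For \<open>H \<sim> Hyp(n,i,k)\<close> the factorial moments are \<open>E (H)\<^sub>r = (i)\<^sub>r (k)\<^sub>r / (n)\<^sub>r\<close>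
  (Vandermonde), which yields closed forms for the variance \<open>s\<close> and the fourth central
  moment. Since \<open>s = i(n-i) k(n-k) / (n\<^sup>2(n-1))\<close> and \<open>x(n-x) \<le> n\<^sup>2/4\<close>, the hypothesis
  \<open>s \<ge> 1\<close> forces \<open>n \<ge> 10\<close> and \<open>i(n-i), k(n-k) \<ge> 4(n-1)\<close>, and then the closed form gives
  \<open>\<kappa> \<le> 8\<close>, hence \<open>P(H \<ge> E H) \<ge> 1/20\<close>.
\<close>

lemma choose_mult':
  assumes "r \<le> j"
  shows "(j choose r) * (i choose j) = (i choose r) * ((i - r) choose (j - r))"
proof (cases "j \<le> i")
  case True
  then show ?thesis using choose_mult[OF assms True] by (simp add: mult.commute)
next
  case False
  then show ?thesis by (cases "r \<le> i") (simp_all add: binomial_eq_0)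
qed

lemma vandermonde_choose_weighted:
  assumes "r \<le> k"
  shows "(\<Sum>j\<le>k. (j choose r) * (i choose j) * (m choose (k - j)))
       = (i choose r) * ((i + m - r) choose (k - r))"
proof (cases "r \<le> i")
  case True
  have "(\<Sum>j\<le>k. (j choose r) * (i choose j) * (m choose (k - j)))
      = (\<Sum>j=r..k. (j choose r) * (i choose j) * (m choose (k - j)))"
    by (rule sum.mono_neutral_right) auto
  also have "\<dots> = (\<Sum>t=0..k-r. ((t + r) choose r) * (i choose (t + r)) * (m choose (k - r - t)))"
    using sum.shift_bounds_cl_nat_ivl[of _ 0 r "k - r"] assms by (simp add: diff_diff_add add.commute)
  also have "\<dots> = (i choose r) * (\<Sum>t\<le>k-r. ((i - r) choose t) * (m choose (k - r - t)))"
    by (simp add: choose_mult' sum_distrib_left atLeast0AtMost mult.assoc)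
  also have "\<dots> = (i choose r) * ((i + m - r) choose (k - r))"
    using vandermonde[of "i - r" m "k - r"] True by simp
  finally show ?thesis .
next
  case False
  then have "(j choose r) * (i choose j) = 0" for j
    by (cases "r \<le> j") (simp_all add: choose_mult' binomial_eq_0)
  with False show ?thesis by (simp add: binomial_eq_0)
qed

definition falling_fact :: "real \<Rightarrow> nat \<Rightarrow> real" where
  "falling_fact x r = (\<Prod>t<r. x - real t)"

lemma falling_fact_0 [simp]: "falling_fact x 0 = 1"
  by (simp add: falling_fact_def)

lemma falling_fact_Suc [simp]: "falling_fact x (Suc r) = falling_fact x r * (x - real r)"
  by (simp add: falling_fact_def)

lemma fact_mult_choose: "fact r * real (j choose r) = falling_fact (real j) r"
  by (simp add: binomial_gbinomial gbinomial_mult_fact falling_fact_def atLeast0LessThan)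

lemma hyp_binomial_moment:
  assumes "i \<le> n" "k \<le> n"
  shows "(\<Sum>j\<le>k. real (j choose r) * hyp_pmf n i k j)
       = real (i choose r) * real (k choose r) / real (n choose r)"
proof (cases "r \<le> k")
  case True
  have "(n choose k) * (k choose r) = (n choose r) * ((n - r) choose (k - r))"
    using choose_mult[OF True assms(2)] .
  then have "real ((n - r) choose (k - r)) / real (n choose k) = real (k choose r) / real (n choose r)"
    using True assms by (simp add: field_simps flip: of_nat_mult)
  moreover have "(\<Sum>j\<le>k. real (j choose r) * hyp_pmf n i k j)
      = real (\<Sum>j\<le>k. (j choose r) * (i choose j) * ((n - i) choose (k - j))) / real (n choose k)"
    by (simp add: hyp_pmf_def sum_divide_distrib mult.assoc)
  ultimately show ?thesis
    using vandermonde_choose_weighted[OF True, of i "n - i"] assms by (simp flip: times_divide_eq_right)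
next
  case False
  then show ?thesis by (simp add: binomial_eq_0)
qed

lemma hyp_factorial_moment:
  assumes "i \<le> n" "k \<le> n"
  shows "(\<Sum>j\<le>k. falling_fact (real j) r * hyp_pmf n i k j)
       = falling_fact (real i) r * falling_fact (real k) r / falling_fact (real n) r"
proof -
  have "(\<Sum>j\<le>k. falling_fact (real j) r * hyp_pmf n i k j)
      = fact r * (\<Sum>j\<le>k. real (j choose r) * hyp_pmf n i k j)"
    by (simp add: sum_distrib_left mult.assoc flip: fact_mult_choose)
  also have "\<dots> = (fact r * real (i choose r)) * (fact r * real (k choose r)) / (fact r * real (n choose r))"
    using hyp_binomial_moment[OF assms] by simp
  finally show ?thesis by (simp only: fact_mult_choose)
qed

lemma hyp_pmf_nonneg: "hyp_pmf n i k j \<ge> 0"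
  by (simp add: hyp_pmf_def)

lemma hyp_pmf_sum:
  assumes "i \<le> n" "k \<le> n"
  shows "(\<Sum>j\<le>k. hyp_pmf n i k j) = 1"
  using hyp_factorial_moment[OF assms, of 0] by simp

lemma hyp_mean_eq:
  assumes "i \<le> n" "k \<le> n"
  shows "hyp_mean n i k = real i * real k / real n"
  using hyp_factorial_moment[OF assms, of 1] by (simp add: hyp_mean_def)

lemma hyp_var_eq:
  assumes "i \<le> n" "k \<le> n" "2 \<le> n"
  shows "hyp_var n i k = real i * real k * (real n - real i) * (real n - real k) / ((real n)^2 * (real n - 1))"
proof -
  define \<mu> where "\<mu> = hyp_mean n i k"
  define M where "M r = (\<Sum>j\<le>k. falling_fact (real j) r * hyp_pmf n i k j)" for r
  have "(real j - \<mu>)^2 * hyp_pmf n i k j = falling_fact (real j) 2 * hyp_pmf n i k j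
      + (1 - 2*\<mu>) * (falling_fact (real j) 1 * hyp_pmf n i k j) + \<mu>^2 * (falling_fact (real j) 0 * hyp_pmf n i k j)" for j
    by (simp add: eval_nat_numeral algebra_simps power2_eq_square)
  then have "hyp_var n i k = M 2 + (1 - 2*\<mu>) * M 1 + \<mu>^2 * M 0"
    by (simp add: hyp_var_def M_def \<mu>_def sum.distrib flip: sum_distrib_left)
  moreover have "M r = falling_fact (real i) r * falling_fact (real k) r / falling_fact (real n) r" for r
    unfolding M_def by (rule hyp_factorial_moment[OF assms(1,2)])
  moreover have "real n \<noteq> 0" "real n - 1 \<noteq> 0" using assms by auto
  ultimately show ?thesis
    unfolding \<mu>_def hyp_mean_eq[OF assms(1,2)]
    by (simp add: eval_nat_numeral divide_simps) (simp add: algebra_simps power2_eq_square)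
qed

lemma hyp_fourth_central_moment:
  assumes "i \<le> n" "k \<le> n" "4 \<le> n"
  defines "N \<equiv> real n" and "I \<equiv> real i" and "K \<equiv> real k" and "s \<equiv> hyp_var n i k"
  shows "(\<Sum>j\<le>k. (real j - hyp_mean n i k)^4 * hyp_pmf n i k j) * ((N - 2) * (N - 3))
       = (3*N^2 + 15*N - 18) * s^2 + (N^2 + N - 6*I*(N - I) - 6*K*(N - K)) * s"
proof -
  define \<mu> where "\<mu> = hyp_mean n i k"
  define M where "M r = (\<Sum>j\<le>k. falling_fact (real j) r * hyp_pmf n i k j)" for r
  \<comment> \<open>\<open>x\<^sup>4 = (x)\<^sub>4 + 6 (x)\<^sub>3 + 7 (x)\<^sub>2 + x\<close>, \<open>x\<^sup>3 = (x)\<^sub>3 + 3 (x)\<^sub>2 + x\<close>, \<open>x\<^sup>2 = (x)\<^sub>2 + x\<close>\<close>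
  have "(real j - \<mu>)^4 * hyp_pmf n i k j = falling_fact (real j) 4 * hyp_pmf n i k j
      + (6 - 4*\<mu>) * (falling_fact (real j) 3 * hyp_pmf n i k j)
      + (7 - 12*\<mu> + 6*\<mu>^2) * (falling_fact (real j) 2 * hyp_pmf n i k j)
      + (1 - 4*\<mu> + 6*\<mu>^2 - 4*\<mu>^3) * (falling_fact (real j) 1 * hyp_pmf n i k j)
      + \<mu>^4 * (falling_fact (real j) 0 * hyp_pmf n i k j)" for j
    by (simp add: eval_nat_numeral algebra_simps)
  then have moments: "(\<Sum>j\<le>k. (real j - \<mu>)^4 * hyp_pmf n i k j)
      = M 4 + (6 - 4*\<mu>) * M 3 + (7 - 12*\<mu> + 6*\<mu>^2) * M 2 + (1 - 4*\<mu> + 6*\<mu>^2 - 4*\<mu>^3) * M 1 + \<mu>^4 * M 0"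
    by (simp add: M_def sum.distrib flip: sum_distrib_left)
  have M: "M r = falling_fact I r * falling_fact K r / falling_fact N r" for r
    unfolding M_def I_def K_def N_def by (rule hyp_factorial_moment[OF assms(1,2)])
  have \<mu>: "\<mu> = I * K / N"
    unfolding \<mu>_def I_def K_def N_def by (rule hyp_mean_eq[OF assms(1,2)])
  have s: "s = I * K * (N - I) * (N - K) / (N^2 * (N - 1))"
    unfolding s_def I_def K_def N_def using assms by (simp add: hyp_var_eq)
  have "N \<noteq> 0" "N - 1 \<noteq> 0" "N - 2 \<noteq> 0" "N - 3 \<noteq> 0"
    using assms by auto
  then show ?thesis
    unfolding \<mu>_def[symmetric] moments unfolding M \<mu> s
    by (simp add: eval_nat_numeral divide_simps) (simp add: algebra_simps)
qed

lemma mult_diff_le_square_div_4: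
  fixes x N :: real
  shows "x * (N - x) \<le> N^2 / 4"
  using zero_le_power2[of "N - 2*x"] by (simp add: power2_eq_square algebra_simps)

lemma factor_ge_of_product_ge:
  fixes A B N :: real
  assumes "0 \<le> A" "0 \<le> B" "B \<le> N^2 / 4" "N^2 * (N - 1) \<le> A * B" "0 < N"
  shows "4 * (N - 1) \<le> A"
proof -
  have "N^2 * (N - 1) \<le> A * (N^2 / 4)"
    using assms(1-4) mult_left_mono[OF assms(3,1)] by linarith
  then have "N^2 * (4 * (N - 1)) \<le> N^2 * A" by (simp add: algebra_simps)
  then show ?thesis using assms(5) by simp
qed

lemma hyp_fourth_central_moment_le:
  assumes "i \<le> n" "k \<le> n" "4 \<le> n" and var: "1 \<le> hyp_var n i k"
  shows "(\<Sum>j\<le>k. (real j - hyp_mean n i k)^4 * hyp_pmf n i k j) \<le> 8 * (hyp_var n i k)^2"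
proof -
  define N I K s where "N = real n" and "I = real i" and "K = real k" and "s = hyp_var n i k"
  define A B where "A = I * (N - I)" and "B = K * (N - K)"
  define c4 where "c4 = (\<Sum>j\<le>k. (real j - hyp_mean n i k)^4 * hyp_pmf n i k j)"
  have N4: "4 \<le> N" using assms by (simp add: N_def)
  have A: "0 \<le> A" "A \<le> N^2 / 4" and B: "0 \<le> B" "B \<le> N^2 / 4"
    unfolding A_def B_def using mult_diff_le_square_div_4 assms
    by (simp_all add: I_def K_def N_def)
  have "A * B = s * (N^2 * (N - 1))"
    using assms N4 by (simp add: s_def hyp_var_eq A_def B_def I_def K_def N_def)
  then have AB: "N^2 * (N - 1) \<le> A * B"
    using var N4 by (simp add: s_def)
  have A_ge: "4 * (N - 1) \<le> A" and B_ge: "4 * (N - 1) \<le> B"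
    using factor_ge_of_product_ge[OF A(1) B AB] factor_ge_of_product_ge[OF B(1) A] AB N4
    by (simp_all add: mult.commute)
  have "N^2 * (N - 1) \<le> N^2 / 4 * (N^2 / 4)"
    using AB mult_mono[OF A(2) B(2) _ B(1)] by simp
  then have "N^2 * (16 * (N - 1)) \<le> N^2 * N^2"
    by (simp add: algebra_simps)
  moreover have "0 < N^2" using N4 by simp
  ultimately have "16 * (N - 1) \<le> N^2"
    using mult_le_cancel_left_pos by blast
  moreover have "N < 10 \<Longrightarrow> 0 \<le> (12 - N) * (N - 4)" using N4 by simp
  ultimately have N10: "10 \<le> N"
    by (fastforce simp: power2_eq_square algebra_simps)
  define D where "D = 5*N^2 - 55*N + 66"
  have "0 \<le> (N - 10) * (5*N - 5)" using N10 by simp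
  then have "0 \<le> D" by (simp add: D_def algebra_simps power2_eq_square)
  have "N^2 + N - 6*A - 6*B \<le> D"
    using A_ge B_ge zero_le_power2[of "N - 1"] by (simp add: D_def power2_eq_square algebra_simps)
  also have "\<dots> \<le> D * s" using \<open>0 \<le> D\<close> var by (simp add: s_def mult_le_cancel_left1)
  finally have "(N^2 + N - 6*A - 6*B) * s \<le> D * s^2"
    using var by (simp add: s_def power2_eq_square mult_right_mono mult.assoc)
  then have "c4 * ((N - 2) * (N - 3)) \<le> (3*N^2 + 15*N - 18) * s^2 + D * s^2"
    using hyp_fourth_central_moment[OF assms(1-3)]
    by (simp add: c4_def s_def N_def I_def K_def A_def B_def mult.assoc)
  also have "\<dots> = (8 * s^2) * ((N - 2) * (N - 3))"
    by (simp add: D_def algebra_simps power2_eq_square)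
  finally show ?thesis using N4 by (simp add: c4_def s_def)
qed

lemma quartic_le_indicator:
  fixes y :: real
  shows "4/25*y + 1/10*y^2 - 1/160*y^4 \<le> (if 0 \<le> y then 1 else 0)"
proof (cases "0 \<le> y")
  case True
  have "800 - 128*y - 80*y^2 + 5*y^4 = 5*(y^2 - 10)^2 + 20*(y - 16/5)^2 + 476/5"
    by (simp add: algebra_simps power2_eq_square power4_eq_xxxx)
  also have "\<dots> \<ge> 0" by simp
  finally show ?thesis using True by simp
next
  case False
  define z where "z = -y"
  have "z > 0" using False by (simp add: z_def)
  have "128 - 80*z + 5*z^3 = 5*z*(z - 23/10)^2 + 23*(z - 2129/920)^2 + 177759/36800"
    by (simp add: algebra_simps power2_eq_square power3_eq_cube)
  moreover have "0 \<le> 5*z*(z - 23/10)^2" using \<open>z > 0\<close> by simp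
  ultimately have "0 \<le> z * (128 - 80*z + 5*z^3)" using \<open>z > 0\<close> by simp
  moreover have "4/25*y + 1/10*y^2 - 1/160*y^4 = -(z * (128 - 80*z + 5*z^3)) / 800"
    by (simp add: z_def algebra_simps power2_eq_square power3_eq_cube power4_eq_xxxx)
  ultimately show ?thesis using False by simp
qed

lemma mass_ge_mean_ge_of_fourth_moment_le:
  fixes x p :: "'a \<Rightarrow> real"
  assumes "finite A" and p_nonneg: "\<And>a. a \<in> A \<Longrightarrow> 0 \<le> p a"
    and centered: "(\<Sum>a\<in>A. (x a - \<mu>) * p a) = 0"
    and var: "(\<Sum>a\<in>A. (x a - \<mu>)^2 * p a) = s" and "0 < s"
    and fourth: "(\<Sum>a\<in>A. (x a - \<mu>)^4 * p a) \<le> \<kappa> * s^2"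
  shows "1/10 - \<kappa>/160 \<le> (\<Sum>a | a \<in> A \<and> \<mu> \<le> x a. p a)"
proof -
  define \<sigma> where "\<sigma> = sqrt s"
  define f :: "real \<Rightarrow> real" where "f y = 4/25*y + 1/10*y^2 - 1/160*y^4" for y
  have "0 < \<sigma>" and \<sigma>2: "\<sigma>^2 = s"
    using \<open>0 < s\<close> by (simp_all add: \<sigma>_def)
  moreover have "\<sigma>^4 = s^2"
    unfolding \<sigma>2[symmetric] by (simp flip: power_mult)
  ultimately have pointwise: "f ((x a - \<mu>) / \<sigma>) * p a = 4/25/\<sigma> * ((x a - \<mu>) * p a)
      + 1/(10*s) * ((x a - \<mu>)^2 * p a) - 1/(160*s^2) * ((x a - \<mu>)^4 * p a)" for a
    by (simp add: f_def power_divide field_simps)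
  have "(\<Sum>a\<in>A. f ((x a - \<mu>) / \<sigma>) * p a)
      = 4/25/\<sigma> * (\<Sum>a\<in>A. (x a - \<mu>) * p a) + 1/(10*s) * (\<Sum>a\<in>A. (x a - \<mu>)^2 * p a)
        - 1/(160*s^2) * (\<Sum>a\<in>A. (x a - \<mu>)^4 * p a)"
    unfolding pointwise by (simp only: sum.distrib sum_subtractf sum_distrib_left)
  also have "\<dots> = 1/10 - (\<Sum>a\<in>A. (x a - \<mu>)^4 * p a) / (160*s^2)"
    using \<open>0 < s\<close> by (simp add: centered var)
  also have "\<dots> \<ge> 1/10 - \<kappa>/160"
    using fourth \<open>0 < s\<close> by (simp add: field_simps)
  finally have "1/10 - \<kappa>/160 \<le> (\<Sum>a\<in>A. f ((x a - \<mu>) / \<sigma>) * p a)" .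
  also have "\<dots> \<le> (\<Sum>a\<in>A. (if \<mu> \<le> x a then 1 else 0) * p a)"
  proof (rule sum_mono)
    fix a assume "a \<in> A"
    have "f ((x a - \<mu>) / \<sigma>) \<le> (if \<mu> \<le> x a then 1 else 0)"
      using quartic_le_indicator[of "(x a - \<mu>) / \<sigma>"] \<open>0 < \<sigma>\<close>
      by (simp add: f_def zero_le_divide_iff)
    then show "f ((x a - \<mu>) / \<sigma>) * p a \<le> (if \<mu> \<le> x a then 1 else 0) * p a"
      using p_nonneg[OF \<open>a \<in> A\<close>] by (rule mult_right_mono)
  qed
  also have "\<dots> = (\<Sum>a | a \<in> A \<and> \<mu> \<le> x a. p a)"
    unfolding sum.inter_filter[OF \<open>finite A\<close>] by (rule sum.cong) auto
  finally show ?thesis .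
qed

theorem corollary1:
  fixes n i k :: nat
  assumes "n \<ge> 4"
    and "i \<in> {1..n}" and "k \<in> {1..n}"
    and "1 \<le> hyp_mean n i k"
    and "hyp_mean n i k \<le> real (min i k) - 2"
    and "real (n - i) * real (n - k) / real n > 1"
    and "hyp_var n i k \<ge> 1"
  shows "hyp_prob n i k (\<lambda>j. real j \<ge> hyp_mean n i k) \<ge> 0.049"
proof -
  have ik: "i \<le> n" "k \<le> n" using assms(2,3) by auto
  have "(\<Sum>j\<le>k. (real j - hyp_mean n i k) * hyp_pmf n i k j) = 0"
    using hyp_pmf_sum[OF ik]
    by (simp add: hyp_mean_def left_diff_distrib sum_subtractf flip: sum_distrib_left)
  moreover have "(\<Sum>j\<le>k. (real j - hyp_mean n i k)^4 * hyp_pmf n i k j) \<le> 8 * (hyp_var n i k)^2"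
    using hyp_fourth_central_moment_le[OF ik assms(1,7)] .
  ultimately have "1/10 - 8/160 \<le> (\<Sum>j | j \<in> {..k} \<and> hyp_mean n i k \<le> real j. hyp_pmf n i k j)"
    using assms(7) hyp_pmf_nonneg
    by (intro mass_ge_mean_ge_of_fourth_moment_le) (simp_all add: hyp_var_def)
  then show ?thesis by (simp add: hyp_prob_def)
qed

end
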